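(* Let $\kappa=4$ and let $Q=U\operatorname{diag}(0,\lambda_2,\lambda_3,\lambda_4)U^{-1}$ be a GTR rate matrix with stationary distribution $\boldsymbol\pi$, eigenvalues $0>\lambda_2\ge\lambda_3\ge\lambda_4$ and $U$ as in the context. (A) If $\boldsymbol\pi=(1/4,1/4,1/4,1/4)$ and $U=\begin{pmatrix}1&c&b&1\\1&-c&-b&1\\1&-b&c&-1\\1&b&-c&-1\end{pmatrix}$ with $b,c\ge0$, $b^2+c^2=2$, then $\lambda_4>\lambda_2+\lambda_3$ if $bc\neq0$, and $\lambda_4>2\lambda_2$ if $bc=0$. (B) If $\boldsymbol\pi=(1/8,1/8,1/4,1/2)$ and $U=\begin{pmatrix}1&2&\sqrt2&1\\1&-2&\sqrt2&1\\1&0&-\sqrt2&1\\1&0&0&-1\end{pmatrix}$, then $\lambda_4>2\lambda_2$.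
   Context: A GTR rate matrix $Q$ for stationary distribution $\boldsymbol\pi$ (positive entries summing to $1$) is a $4\times4$ real matrix with strictly positive off-diagonal entries, zero row sums, and $\operatorname{diag}(\boldsymbol\pi)Q$ symmetric. $U$ is real with $UU^T=\operatorname{diag}(\boldsymbol\pi)^{-1}$ and first column $\mathbf 1$, and $Q=U\operatorname{diag}(0,\lambda_2,\lambda_3,\lambda_4)U^{-1}$. *)

theory Defs
  imports "HOL-Analysis.Analysis"
begin

text \<open>4x4 real matrices are rendered as real^4^4; vectors built with the library's
  vector [.,.,.,.] (entry k of the list is component k, k = 1..4 in type 4, the
  fourth being 4 = 0). Matrices are built row by row.\<close>

definition diag_mat :: "real^'n \<Rightarrow> real^'n^'n" where
  "diag_mat d = (\<chi> i j. if i = j then d $ i else 0)"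

definition gtr_rate_matrix :: "real^4 \<Rightarrow> real^4^4 \<Rightarrow> bool" where
  "gtr_rate_matrix p Q \<longleftrightarrow>
     (\<forall>i. p $ i > 0) \<and> (\<Sum>i\<in>UNIV. p $ i) = 1 \<and>
     (\<forall>i j. i \<noteq> j \<longrightarrow> Q $ i $ j > 0) \<and>
     (\<forall>i. (\<Sum>j\<in>UNIV. Q $ i $ j) = 0) \<and>
     transpose (diag_mat p ** Q) = diag_mat p ** Q"

definition gtr_setting :: "real^4 \<Rightarrow> real^4^4 \<Rightarrow> real^4^4 \<Rightarrow> real \<Rightarrow> real \<Rightarrow> real \<Rightarrow> bool" where
  "gtr_setting p U Q l2 l3 l4 \<longleftrightarrow>
     gtr_rate_matrix p Q \<and>
     U ** transpose U = matrix_inv (diag_mat p) \<and>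
     (\<forall>i. U $ i $ 1 = 1) \<and>
     Q = U ** diag_mat (vector [0, l2, l3, l4]) ** matrix_inv U \<and>
     0 > l2 \<and> l2 \<ge> l3 \<and> l3 \<ge> l4"

end

theory Submission
  imports Defs
begin

text \<open>
  The hypothesis U U^T = diag(pi)^-1 says that U^T diag(pi) is the
  inverse of U, so the spectral decomposition Q = U diag(0, l2, l3, l4) U^-1 can
  be read off entrywise:
    Q_ij = pi_j (l2 U_i2 U_j2 + l3 U_i3 U_j3 + l4 U_i4 U_j4),
  the eigenvalue 0 contributing nothing.  Since pi_j > 0, positivity of an
  off-diagonal entry of Q is a strict linear inequality between the eigenvalues
  whose coefficients are products of two rows of U.

  For (A) the entries Q_12 and Q_34 give l4 > c^2 l2 + b^2 l3 and
  l4 > b^2 l2 + c^2 l3; their sum is l4 > l2 + l3, and if b c = 0 one of them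
  reads l4 > 2 l2.  For (B) the entries Q_12 and Q_13 give l4 > 4 l2 - 2 l3 and
  l4 > 2 l3, whose sum is l4 > 2 l2.
\<close>

lemma vector_4 [simp]:
  "(vector [x, y, z, w] :: ('a::zero)^4) $ 1 = x"
  "(vector [x, y, z, w] :: ('a::zero)^4) $ 2 = y"
  "(vector [x, y, z, w] :: ('a::zero)^4) $ 3 = z"
  "(vector [x, y, z, w] :: ('a::zero)^4) $ 4 = w"
  unfolding vector_def by simp_all

lemma matrix_inv_eqI:
  fixes A B :: "'a::comm_ring_1^'n^'n"
  assumes AB: "A ** B = mat 1" and BA: "B ** A = mat 1"
  shows "matrix_inv A = B"
proof -
  have inv: "A ** matrix_inv A = mat 1 \<and> matrix_inv A ** A = mat 1"
    unfolding matrix_inv_def by (rule someI_ex) (use assms in blast)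
  have "matrix_inv A = matrix_inv A ** (A ** B)" using AB by simp
  also have "\<dots> = B" using inv BA by (simp add: matrix_mul_assoc)
  finally show ?thesis .
qed

lemma matrix_mul_diag_mat [simp]:
  fixes A :: "real^'n^'m"
  shows "(A ** diag_mat d) $ i $ j = A $ i $ j * d $ j"
  unfolding matrix_matrix_mult_def diag_mat_def
  by (simp add: if_distrib if_distribR cong: if_cong)

lemma diag_mat_inverse:
  fixes p :: "real^'n"
  assumes "\<forall>i. p $ i \<noteq> 0"
  shows "diag_mat p ** diag_mat (\<chi> i. inverse (p $ i)) = mat 1"
  using assms by (simp add: vec_eq_iff mat_def diag_mat_def[of p])

lemma matrix_inv_diag_mat:
  fixes p :: "real^'n"
  assumes "\<forall>i. p $ i \<noteq> 0"
  shows "matrix_inv (diag_mat p) = diag_mat (\<chi> i. inverse (p $ i))"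
  using diag_mat_inverse[OF assms] matrix_left_right_inverse by (blast intro: matrix_inv_eqI)

text \<open>If U U^T = diag(pi)^-1 then U^-1 = U^T diag(pi): the columns of U are
  orthonormal for the inner product weighted by pi.\<close>
lemma matrix_inv_weighted_orthogonal:
  fixes p :: "real^'n" and U :: "real^'n^'n"
  assumes p: "\<forall>i. p $ i \<noteq> 0"
    and UU: "U ** transpose U = matrix_inv (diag_mat p)"
  shows "matrix_inv U = transpose U ** diag_mat p"
proof (rule matrix_inv_eqI)
  have "U ** transpose U ** diag_mat p = mat 1"
    unfolding UU matrix_inv_diag_mat[OF p] using diag_mat_inverse[OF p] matrix_left_right_inverse
    by blast
  then show "U ** (transpose U ** diag_mat p) = mat 1"
    by (simp add: matrix_mul_assoc)
  then show "transpose U ** diag_mat p ** U = mat 1"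
    using matrix_left_right_inverse by blast
qed

lemma spectral_entry:
  fixes U :: "real^'n^'n"
  shows "(U ** diag_mat d ** (transpose U ** diag_mat p)) $ i $ j
           = p $ j * (\<Sum>k\<in>UNIV. d $ k * U $ i $ k * U $ j $ k)"
  by (simp add: matrix_matrix_mult_def[of "U ** diag_mat d"] transpose_def
                sum_distrib_left mult_ac)

lemma gtr_setting_off_diagonal:
  assumes S: "gtr_setting p U Q l2 l3 l4" and ij: "i \<noteq> j"
  shows "0 < l2 * U $ i $ 2 * U $ j $ 2 + l3 * U $ i $ 3 * U $ j $ 3 + l4 * U $ i $ 4 * U $ j $ 4"
proof -
  have R: "gtr_rate_matrix p Q" and UU: "U ** transpose U = matrix_inv (diag_mat p)"
    and Q: "Q = U ** diag_mat (vector [0, l2, l3, l4]) ** matrix_inv U"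
    using S unfolding gtr_setting_def by auto
  have p: "\<forall>i. p $ i > 0" and Qij: "Q $ i $ j > 0"
    using R ij unfolding gtr_rate_matrix_def by auto
  then have "matrix_inv U = transpose U ** diag_mat p"
    using UU by (intro matrix_inv_weighted_orthogonal) (auto simp: less_le)
  then have "Q $ i $ j = p $ j * (l2 * U $ i $ 2 * U $ j $ 2 + l3 * U $ i $ 3 * U $ j $ 3
                                  + l4 * U $ i $ 4 * U $ j $ 4)"
    unfolding Q by (simp add: spectral_entry sum_4)
  with Qij p show ?thesis by (metis zero_less_mult_pos)
qed

lemma lemma3_uniform:
  fixes b c :: real
  assumes bc: "b\<^sup>2 + c\<^sup>2 = 2"
    and S: "gtr_setting (vector [1/4, 1/4, 1/4, 1/4])
              (vector [vector [1, c, b, 1], vector [1, -c, -b, 1],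
                       vector [1, -b, c, -1], vector [1, b, -c, -1]]) Q l2 l3 l4"
  shows "(b * c \<noteq> 0 \<longrightarrow> l4 > l2 + l3) \<and> (b * c = 0 \<longrightarrow> l4 > 2 * l2)"
proof -
  have Q12: "l4 > c\<^sup>2 * l2 + b\<^sup>2 * l3"
    using gtr_setting_off_diagonal[OF S, of 1 2] by (simp add: power2_eq_square algebra_simps)
  have Q34: "l4 > b\<^sup>2 * l2 + c\<^sup>2 * l3"
    using gtr_setting_off_diagonal[OF S, of 3 4] by (simp add: power2_eq_square algebra_simps)
  have "2 * l4 > (b\<^sup>2 + c\<^sup>2) * l2 + (b\<^sup>2 + c\<^sup>2) * l3"
    using Q12 Q34 by (simp add: algebra_simps)
  then have "l4 > l2 + l3" using bc by simp
  moreover have "l4 > 2 * l2" if degenerate: "b * c = 0"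
  proof -
    consider "b = 0" | "c = 0" using degenerate by auto
    then show ?thesis
    proof cases
      case 1 then show ?thesis using Q12 bc by simp
    next
      case 2 then show ?thesis using Q34 bc by simp
    qed
  qed
  ultimately show ?thesis by blast
qed

lemma lemma3_nonuniform:
  assumes S: "gtr_setting (vector [1/8, 1/8, 1/4, 1/2])
              (vector [vector [1, 2, sqrt 2, 1], vector [1, -2, sqrt 2, 1],
                       vector [1, 0, - sqrt 2, 1], vector [1, 0, 0, -1]]) Q l2 l3 l4"
  shows "l4 > 2 * l2"
proof -
  have Q12: "l4 > 4 * l2 - 2 * l3"
    using gtr_setting_off_diagonal[OF S, of 1 2] by (simp add: mult.assoc)
  have Q13: "l4 > 2 * l3"
    using gtr_setting_off_diagonal[OF S, of 1 3] by (simp add: mult.assoc)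
  show ?thesis using Q12 Q13 by linarith
qed

theorem lemma3:
  shows
  "(\<forall>(Q::real^4^4) l2 l3 l4 (b::real) (c::real).
      b \<ge> 0 \<longrightarrow> c \<ge> 0 \<longrightarrow> b\<^sup>2 + c\<^sup>2 = 2 \<longrightarrow>
      gtr_setting (vector [1/4, 1/4, 1/4, 1/4])
        (vector [vector [1, c, b, 1], vector [1, -c, -b, 1],
                 vector [1, -b, c, -1], vector [1, b, -c, -1]]) Q l2 l3 l4 \<longrightarrow>
      (b * c \<noteq> 0 \<longrightarrow> l4 > l2 + l3) \<and> (b * c = 0 \<longrightarrow> l4 > 2 * l2))
   \<and>
   (\<forall>(Q::real^4^4) l2 l3 l4.
      gtr_setting (vector [1/8, 1/8, 1/4, 1/2])
        (vector [vector [1, 2, sqrt 2, 1], vector [1, -2, sqrt 2, 1],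
                 vector [1, 0, - sqrt 2, 1], vector [1, 0, 0, -1]]) Q l2 l3 l4 \<longrightarrow>
      l4 > 2 * l2)"
    using lemma3_uniform lemma3_nonuniform by blast

end
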